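(* Fix $\theta\in\mathbb{R}$ and a value $r\in\{0,1\}$ of the encryption randomness, and let $\mathcal{E}(\rho)=\mathcal{H}^\theta_r\rho(\mathcal{H}^\theta_r)^\dagger$ be the superoperator applied by $\Xi$ to the message qubit. For $t\in[0,1]$, the scheme $\Xi$ is $(t,\tfrac{1}{2}(2^{1-t}-1))$-indistinguishable on classical message states: for every density operator $\rho=\gamma_0\lvert 0\rangle\langle 0\rvert+\gamma_1\lvert 1\rangle\langle 1\rvert$ with $H_\infty(\rho)\ge t$, $$\Big\lVert \mathcal{E}(\rho)-\tfrac{1}{2}\mathbb{I}\Big\rVert_{tr}\le \tfrac{1}{2}(2^{1-t}-1).$$
   Context: For $\theta\in\mathbb{R}$ and $u\in\{0,1\}$, $\mathcal{H}^\theta_u=\frac{1}{\sqrt{2}}\begin{bmatrix}1 & 1\\ (-1)^u e^{i\theta} & (-1)^{u+1}e^{i\theta}\end{bmatrix}$. The scheme $\Xi$ encrypts a classical message bit $b$ under secret bit $s$ and angle $\theta$ by sampling a uniformly random bit $r$ and outputting $(\mathcal{H}^\theta_r\lvert s\rangle,\mathcal{H}^\theta_r\lvert b\rangle)$; the message qubit is thus transformed by $\mathcal{H}^\theta_r$. $H_\infty(\rho)=-\log_2\max\{\gamma_0,\gamma_1\}$ is the min-entropy, $\lVert X\rVert_{tr}=\frac{1}{2}\mathrm{Tr}\sqrt{X^\dagger X}$ is the trace distance norm, and $\mathbb{I}$ is the $2\times 2$ identity. (An encryption superoperator $\mathcal{E}$ is $(t,\epsilon)$-indistinguishable if $\lVert\mathcal{E}(\rho)-\frac{1}{d}\mathbb{I}\rVert_{tr}\le\epsilon$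 for all $\rho$ with $H_\infty(\rho)\ge t$, where $d$ is the message-space dimension, here $d=2$.) *)

theory Defs
  imports "HOL-Analysis.Analysis"
begin

text \<open>2x2 complex matrices are represented as complex^2^2 (rows indexed by 1,2).\<close>

definition adj :: "complex^2^2 \<Rightarrow> complex^2^2" where
  "adj A = (\<chi> i j. cnj (A $ j $ i))"

definition ctrace :: "complex^2^2 \<Rightarrow> complex" where
  "ctrace A = (\<Sum>i\<in>UNIV. A $ i $ i)"

definition hermitian2 :: "complex^2^2 \<Rightarrow> bool" where
  "hermitian2 A \<longleftrightarrow> adj A = A"

definition psd2 :: "complex^2^2 \<Rightarrow> bool" where
  "psd2 A \<longleftrightarrow> hermitian2 A \<and>
     (\<forall>v::complex^2. 0 \<le> Re (\<Sum>i\<in>UNIV. cnj (v $ i) * (A *v v) $ i))"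

definition msqrt :: "complex^2^2 \<Rightarrow> complex^2^2" where
  "msqrt A = (THE B. psd2 B \<and> B ** B = A)"

definition tr_norm :: "complex^2^2 \<Rightarrow> real" where
  "tr_norm X = (1/2) * Re (ctrace (msqrt (adj X ** X)))"

definition Hmat :: "real \<Rightarrow> nat \<Rightarrow> complex^2^2" where
  "Hmat \<theta> u = (let c = 1 / complex_of_real (sqrt 2); e = exp (\<i> * complex_of_real \<theta>) in
     vector [vector [c * 1, c * 1],
             vector [c * ((-1) ^ u * e), c * ((-1) ^ (u + 1) * e)]])"

definition Enc :: "real \<Rightarrow> nat \<Rightarrow> complex^2^2 \<Rightarrow> complex^2^2" where
  "Enc \<theta> r \<rho> = Hmat \<theta> r ** \<rho> ** adj (Hmat \<theta> r)"

definition diag_state :: "real \<Rightarrow> real \<Rightarrow> complex^2^2" where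
  "diag_state g0 g1 = vector [vector [complex_of_real g0, 0], vector [0, complex_of_real g1]]"

definition min_entropy :: "real \<Rightarrow> real \<Rightarrow> real" where
  "min_entropy g0 g1 = - log 2 (max g0 g1)"

end

theory Submission
  imports Defs
begin

text \<open>Since \<open>Hmat \<theta> r\<close> is unitary, \<open>Enc \<theta> r \<rho> - 1/2\<close> is the conjugate of \<open>\<rho> - 1/2\<close>; for a
  classical state with \<open>g0 + g1 = 1\<close> it is an antidiagonal matrix \<open>X\<close> with entries of modulus
  \<open>\<bar>g0 - 1/2\<bar>\<close>. Hence \<open>X\<^sup>\<dagger> X\<close> is a scalar matrix and the trace norm is exactly
  \<open>\<bar>g0 - 1/2\<bar> = max g0 g1 - 1/2\<close>, while the min-entropy hypothesis says \<open>max g0 g1 \<le> 2 powr - t\<close>.\<close>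

definition antidiag :: "complex \<Rightarrow> complex^2^2" where
  "antidiag w = vector [vector [0, cnj w], vector [w, 0]]"

lemma Enc_diag_state_minus_half:
  assumes "g0 + g1 = 1"
  shows "Enc \<theta> r (diag_state g0 g1) - mat (1/2) =
    antidiag ((-1)^r * exp (\<i> * complex_of_real \<theta>) * complex_of_real (g0 - 1/2))"
proof -
  have sqrt2: "complex_of_real (sqrt 2) * complex_of_real (sqrt 2) = 2"
    by (simp flip: of_real_mult)
  have exp_unit: "exp (\<i> * complex_of_real \<theta>) * cnj (exp (\<i> * complex_of_real \<theta>)) = 1"
    by (simp add: exp_cnj flip: exp_add)
  have g1: "g1 = 1 - g0"
    using assms by simp
  show ?thesis
    by (simp add: vec_eq_iff forall_2 sum_2 Enc_def Hmat_def diag_state_def adj_def antidiag_def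
        matrix_matrix_mult_def mat_def Let_def sqrt2 g1, intro conjI; simp add: field_simps exp_unit)
qed

lemma psd2_entries:
  fixes v :: "complex^2"
  assumes "psd2 B"
  shows "B$1$2 = cnj (B$2$1)" "B$1$1 = complex_of_real (Re (B$1$1))" "B$2$2 = complex_of_real (Re (B$2$2))"
    and "0 \<le> Re (cnj (v$1) * (B$1$1 * v$1 + B$1$2 * v$2) + cnj (v$2) * (B$2$1 * v$1 + B$2$2 * v$2))"
proof -
  have "adj B = B"
    using assms by (simp add: psd2_def hermitian2_def)
  then have herm: "cnj (B$j$i) = B$i$j" for i j
    by (metis (no_types, lifting) adj_def vec_lambda_beta)
  show "B$1$2 = cnj (B$2$1)"
    using herm[of 2 1] by simp
  show "B$1$1 = complex_of_real (Re (B$1$1))" "B$2$2 = complex_of_real (Re (B$2$2))"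
    using herm[of 1 1] herm[of 2 2] by (simp_all add: complex_eq_iff)
  have "\<And>v::complex^2. 0 \<le> Re (\<Sum>i\<in>UNIV. cnj (v $ i) * (B *v v) $ i)"
    using assms by (simp add: psd2_def)
  then show "0 \<le> Re (cnj (v$1) * (B$1$1 * v$1 + B$1$2 * v$2) + cnj (v$2) * (B$2$1 * v$1 + B$2$2 * v$2))"
    by (simp only: sum_2 matrix_vector_mult_def vec_lambda_beta)
qed

lemma psd2_scalar_mat: "0 \<le> s \<Longrightarrow> psd2 (mat (complex_of_real s))"
  by (simp add: psd2_def hermitian2_def adj_def mat_def vec_eq_iff forall_2 sum_2 matrix_vector_mult_def
      mult.assoc[symmetric] mult.commute[of "cnj _"] complex_mult_cnj)
     (intro allI add_nonneg_nonneg; simp add: mult.assoc)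

lemma mat_mult_mat: "(mat x :: complex^2^2) ** mat y = mat (x * y)"
  by (simp add: vec_eq_iff forall_2 sum_2 mat_def matrix_matrix_mult_def)

lemma psd2_square_root_of_scalar:
  assumes "psd2 B" "B ** B = mat (complex_of_real s)"
  shows "B = mat (complex_of_real (sqrt s))"
proof -
  define a where "a = Re (B$1$1)"
  define e where "e = Re (B$2$2)"
  define c where "c = B$2$1"
  note entries = psd2_entries[OF assms(1)]
  have B: "B = vector [vector [complex_of_real a, cnj c], vector [c, complex_of_real e]]"
    using entries(1-3) by (simp add: vec_eq_iff forall_2 a_def e_def c_def)
  have nonneg: "0 \<le> a" "0 \<le> e"
    using entries(4)[of "vector [1, 0]"] entries(4)[of "vector [0, 1]"] by (simp_all add: a_def e_def)
  have square: "complex_of_real a * complex_of_real a + cnj c * c = complex_of_real s"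
      "complex_of_real a * cnj c + cnj c * complex_of_real e = 0"
      "c * cnj c + complex_of_real e * complex_of_real e = complex_of_real s"
    using assms(2) unfolding B by (simp_all add: vec_eq_iff forall_2 sum_2 matrix_matrix_mult_def mat_def)
  have "c = 0"
  proof (rule ccontr)
    assume "c \<noteq> 0"
    have "cnj c * complex_of_real (a + e) = 0"
      using square(2) by (simp add: algebra_simps)
    with \<open>c \<noteq> 0\<close> have "a + e = 0"
      by (metis mult_eq_0_iff complex_cnj_zero_iff of_real_eq_0_iff)
    with nonneg have "a = 0" "e = 0"
      by linarith+
    \<comment> \<open>a hermitian matrix with zero diagonal and a nonzero off-diagonal entry is indefinite\<close>
    then have "B$1$1 = 0" "B$1$2 = cnj c" "B$2$1 = c" "B$2$2 = 0"
      by (subst B; simp)+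
    then have "0 \<le> Re (cnj c * (- c) + cnj (- c) * c)"
      using entries(4)[of "vector [1, - c]"] by simp
    then have "Re c ^ 2 + Im c ^ 2 \<le> 0"
      by (simp add: power2_eq_square)
    then have "cmod c ^ 2 \<le> 0"
      by (simp add: cmod_power2)
    with \<open>c \<noteq> 0\<close> show False
      by simp
  qed
  have "a = sqrt s"
  proof -
    have "a * a = s"
      using square(1) \<open>c = 0\<close> by (simp flip: of_real_mult)
    with nonneg show ?thesis
      by auto
  qed
  moreover have "e = sqrt s"
  proof -
    have "e * e = s"
      using square(3) \<open>c = 0\<close> by (simp flip: of_real_mult)
    with nonneg show ?thesis
      by auto
  qed
  ultimately show ?thesis
    using \<open>c = 0\<close> by (simp add: B vec_eq_iff forall_2 mat_def)
qed

lemma msqrt_scalar_mat: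
  assumes "0 \<le> s"
  shows "msqrt (mat (complex_of_real s)) = mat (complex_of_real (sqrt s))"
  unfolding msqrt_def
proof (rule the_equality)
  show "psd2 (mat (complex_of_real (sqrt s))) \<and>
      (mat (complex_of_real (sqrt s)) :: complex^2^2) ** mat (complex_of_real (sqrt s)) = mat (complex_of_real s)"
    using assms by (simp add: psd2_scalar_mat mat_mult_mat flip: of_real_mult)
qed (use psd2_square_root_of_scalar in blast)

lemma tr_norm_scalar_square:
  assumes "adj X ** X = mat (complex_of_real s)" "0 \<le> s"
  shows "tr_norm X = sqrt s"
  unfolding tr_norm_def assms(1) msqrt_scalar_mat[OF assms(2)] by (simp add: ctrace_def sum_2 mat_def)

lemma tr_norm_antidiag: "tr_norm (antidiag w) = cmod w"
proof -
  have "w * cnj w = complex_of_real (cmod w) ^ 2" "cnj w * w = complex_of_real (cmod w) ^ 2"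
    using complex_norm_square[of w] by (simp_all add: mult.commute)
  then have "adj (antidiag w) ** antidiag w = mat (complex_of_real (cmod w ^ 2))"
    by (simp add: vec_eq_iff forall_2 sum_2 mat_def matrix_matrix_mult_def adj_def antidiag_def)
  from tr_norm_scalar_square[OF this] show ?thesis
    by simp
qed

lemma max_le_of_min_entropy_ge:
  assumes "min_entropy g0 g1 \<ge> t" "0 < max g0 g1"
  shows "max g0 g1 \<le> 2 powr (- t)"
proof -
  have "log 2 (max g0 g1) \<le> - t"
    using assms(1) by (simp add: min_entropy_def)
  then have "2 powr log 2 (max g0 g1) \<le> 2 powr (- t)"
    by (rule powr_mono) simp
  with assms(2) show ?thesis
    by simp
qed

theorem theorem3:
  fixes \<theta> t g0 g1 :: real and r :: nat
  assumes "r \<in> {0, 1}"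
    and "0 \<le> t" and "t \<le> 1"
    and "0 \<le> g0" and "0 \<le> g1" and "g0 + g1 = 1"
    and "min_entropy g0 g1 \<ge> t"
  shows "tr_norm (Enc \<theta> r (diag_state g0 g1) - mat (1/2)) \<le> (1/2) * (2 powr (1 - t) - 1)"
proof -
  have "tr_norm (Enc \<theta> r (diag_state g0 g1) - mat (1/2)) =
      cmod ((-1)^r * exp (\<i> * complex_of_real \<theta>) * complex_of_real (g0 - 1/2))"
    by (simp only: Enc_diag_state_minus_half[OF assms(6)] tr_norm_antidiag)
  also have "\<dots> = \<bar>g0 - 1/2\<bar>"
    by (simp only: norm_mult norm_power norm_minus_cancel norm_one power_one norm_exp_i_times
        norm_of_real mult_1_left)
  also have "\<dots> = max g0 g1 - 1/2"
    using assms(6) by auto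
  also have "\<dots> \<le> 2 powr (- t) - 1/2"
    using max_le_of_min_entropy_ge[OF assms(7)] assms(6) by linarith
  also have "\<dots> = (1/2) * (2 powr (1 - t) - 1)"
    using powr_add[of 2 1 "- t"] by simp
  finally show ?thesis .
qed

end
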